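(* Let $t>1$ be an integer and $n$ sufficiently large. Among all $K_{t-1,t}$-saturated $n$ by $n$ bipartite graphs with minimum degree less than $t-1$, a graph $G$ has the minimum number of edges if and only if $G\in\mathcal{F}^n_{t-1,t}$ and $G$ has minimum degree $t-2$.
   Context: An $n$ by $n$ bipartite graph $G$ has two color classes $U,U'$ with $|U|=|U'|=n$. For $1\le s\le t$, such a $G$ is called $K_{s,t}$-saturated if $G$ contains no subgraph isomorphic to $K_{s,t}$ (with either side of $K_{s,t}$ lying in either class), but adding any missing edge $uu'$ with $u\in U$, $u'\in U'$ creates a subgraph isomorphic to $K_{s,t}$ (with either orientation). $\mathcal{F}^n_{s,t}$ denotes the family of $K_{s,t}$-free $n$ by $n$ bipartite graphs in which one of the color classes contains a set $S$ of $s-1$ vertices such that every vertex of $S$ is adjacent to all $n$ vertices of the other class, and every vertex of that same class not in $S$ has degree exactly $t-1$. (Each graph in $\mathcal{F}^n_{t-1,t}$ has exactly $(2t-3)n-(t-1)(t-2)$ edges.) *)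

theory Defs
  imports Main
begin

text \<open>An n by n bipartite graph: colour classes U = {0..<n} and U' = {0..<n} (two disjoint
copies); an edge u u' with u in U, u' in U' is the pair (u, u').\<close>

definition bigraph :: "nat \<Rightarrow> (nat \<times> nat) set \<Rightarrow> bool" where
  "bigraph n E \<longleftrightarrow> E \<subseteq> {..<n} \<times> {..<n}"

definition degL :: "(nat \<times> nat) set \<Rightarrow> nat \<Rightarrow> nat" where
  "degL E u = card {v. (u, v) \<in> E}"

definition degR :: "(nat \<times> nat) set \<Rightarrow> nat \<Rightarrow> nat" where
  "degR E v = card {u. (u, v) \<in> E}"

definition min_degree :: "nat \<Rightarrow> (nat \<times> nat) set \<Rightarrow> nat" where
  "min_degree n E = Min ((degL E ` {..<n}) \<union> (degR E ` {..<n}))"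

definition contains_K :: "nat \<Rightarrow> nat \<Rightarrow> nat \<Rightarrow> (nat \<times> nat) set \<Rightarrow> bool" where
  "contains_K s t n E \<longleftrightarrow> (\<exists>A B. A \<subseteq> {..<n} \<and> B \<subseteq> {..<n} \<and>
      ((card A = s \<and> card B = t) \<or> (card A = t \<and> card B = s)) \<and> A \<times> B \<subseteq> E)"

definition K_saturated :: "nat \<Rightarrow> nat \<Rightarrow> nat \<Rightarrow> (nat \<times> nat) set \<Rightarrow> bool" where
  "K_saturated s t n E \<longleftrightarrow> bigraph n E \<and> \<not> contains_K s t n E \<and>
     (\<forall>u<n. \<forall>v<n. (u, v) \<notin> E \<longrightarrow> contains_K s t n (insert (u, v) E))"

definition family_F :: "nat \<Rightarrow> nat \<Rightarrow> nat \<Rightarrow> (nat \<times> nat) set \<Rightarrow> bool" where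
  "family_F s t n E \<longleftrightarrow> bigraph n E \<and> \<not> contains_K s t n E \<and>
     ((\<exists>S. S \<subseteq> {..<n} \<and> card S = s - 1 \<and> (\<forall>u\<in>S. \<forall>v<n. (u, v) \<in> E) \<and>
           (\<forall>u\<in>{..<n} - S. degL E u = t - 1)) \<or>
      (\<exists>S. S \<subseteq> {..<n} \<and> card S = s - 1 \<and> (\<forall>v\<in>S. \<forall>u<n. (u, v) \<in> E) \<and>
           (\<forall>v\<in>{..<n} - S. degR E v = t - 1)))"

end

theory Submission
  imports Defs
begin

text \<open>Write \<open>s = k + 1\<close>, \<open>t = k + 2\<close>, and let \<open>x\<close> be a vertex of degree at most \<open>k\<close>, say in \<open>U'\<close>,
  with neighbourhood \<open>A\<close>. Saturation at a non-edge \<open>ux\<close> forces \<open>|A| = k\<close> and gives \<open>k + 1\<close> common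
  neighbours of \<open>A \<union> {u}\<close>. So every vertex of \<open>U - A\<close> has at least \<open>k + 1\<close> neighbours in the common
  neighbourhood \<open>C\<close> of \<open>A\<close>, and every vertex of \<open>U' - C\<close> has degree at least \<open>k\<close>; counting the
  edges in \<open>A \<times> C\<close>, \<open>(U - A) \<times> C\<close> and \<open>U \<times> (U' - C)\<close> gives \<open>|E| \<ge> kn + (k + 1)(n - k)\<close>, the
  size of every graph in \<open>F\<close>. In case of equality each \<open>y \<in> U' - C\<close> has degree \<open>k\<close>, and saturation
  at a non-edge \<open>uy\<close> yields \<open>k + 1\<close> vertices of \<open>C\<close> joined to \<open>A\<close>, to \<open>u\<close> and to a neighbour of \<open>y\<close>
  outside \<open>A\<close>: a \<open>K_{k+2,k+1}\<close>. Hence \<open>C = U'\<close> and the graph lies in \<open>F\<close>. The bound is attained by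
  \<open>k\<close> full rows together with \<open>n - k\<close> rows on pairwise distinct \<open>(k + 1)\<close>-sets avoiding one column.\<close>

lemma bigraph_converse [simp]: "bigraph n (E\<inverse>) \<longleftrightarrow> bigraph n E"
  by (auto simp: bigraph_def)

lemma degL_converse [simp]: "degL (E\<inverse>) u = degR E u"
  by (simp add: degL_def degR_def)

lemma degR_converse [simp]: "degR (E\<inverse>) v = degL E v"
  by (simp add: degL_def degR_def)

lemma contains_K_converse [simp]: "contains_K s t n (E\<inverse>) \<longleftrightarrow> contains_K s t n E"
proof -
  have "A \<times> B \<subseteq> E\<inverse> \<longleftrightarrow> B \<times> A \<subseteq> E" for A B by auto
  then show ?thesis
    unfolding contains_K_def by metis
qed

lemma K_saturated_converse [simp]: "K_saturated s t n (E\<inverse>) \<longleftrightarrow> K_saturated s t n E"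
proof -
  have "insert (u, v) (E\<inverse>) = (insert (v, u) E)\<inverse>" for u v by auto
  then show ?thesis
    unfolding K_saturated_def by auto
qed

lemma family_F_converse [simp]: "family_F s t n (E\<inverse>) \<longleftrightarrow> family_F s t n E"
  unfolding family_F_def by (simp add: disj_commute)

lemma finite_if_bigraph: "bigraph n E \<Longrightarrow> finite E"
  unfolding bigraph_def by (rule finite_subset) auto

lemma card_Int_Times_eq_sum_rows:
  assumes "finite X" "finite Y"
  shows "card (E \<inter> (X \<times> Y)) = (\<Sum>u\<in>X. card {v\<in>Y. (u, v) \<in> E})"
proof -
  have "E \<inter> (X \<times> Y) = (SIGMA u:X. {v\<in>Y. (u, v) \<in> E})" by auto
  then show ?thesis using assms by simp
qed

lemma card_Int_Times_eq_sum_columns: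
  assumes "finite X" "finite Y"
  shows "card (E \<inter> (X \<times> Y)) = (\<Sum>v\<in>Y. card {u\<in>X. (u, v) \<in> E})"
proof -
  have "E \<inter> (X \<times> Y) = (E\<inverse> \<inter> (Y \<times> X))\<inverse>" by auto
  then show ?thesis
    using card_Int_Times_eq_sum_rows[OF assms(2,1), of "E\<inverse>"] by simp
qed

lemma card_eq_sum_degL:
  assumes "bigraph n E"
  shows "card E = (\<Sum>u<n. degL E u)"
proof -
  have "E = E \<inter> ({..<n} \<times> {..<n})" and "{v\<in>{..<n}. (u, v) \<in> E} = {v. (u, v) \<in> E}" for u
    using assms by (auto simp: bigraph_def)
  then show ?thesis
    using card_Int_Times_eq_sum_rows[of "{..<n}" "{..<n}" E] by (simp add: degL_def)
qed

lemma card_eq_sum_degR: "bigraph n E \<Longrightarrow> card E = (\<Sum>v<n. degR E v)"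
  using card_eq_sum_degL[of n "E\<inverse>"] by simp

lemma finite_column: "bigraph n E \<Longrightarrow> finite {u. (u, v) \<in> E}"
  unfolding bigraph_def by (rule finite_subset[of _ "{..<n}"]) auto

lemma column_subset: "bigraph n E \<Longrightarrow> {u. (u, v) \<in> E} \<subseteq> {..<n}"
  unfolding bigraph_def by auto

lemma K_saturated_bigraph: "K_saturated s t n E \<Longrightarrow> bigraph n E"
  and K_saturated_K_free: "K_saturated s t n E \<Longrightarrow> \<not> contains_K s t n E"
  by (simp_all add: K_saturated_def)

lemma K_saturated_new_copy:
  assumes sat: "K_saturated s t n E" and "u < n" "v < n" "(u, v) \<notin> E"
  obtains A B where "A \<subseteq> {..<n}" "B \<subseteq> {..<n}"
    "(card A = s \<and> card B = t) \<or> (card A = t \<and> card B = s)"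
    "A \<times> B \<subseteq> insert (u, v) E" "u \<in> A" "v \<in> B"
proof -
  have "contains_K s t n (insert (u, v) E)"
    using sat assms(2-4) unfolding K_saturated_def by blast
  then obtain A B where AB: "A \<subseteq> {..<n}" "B \<subseteq> {..<n}"
      "(card A = s \<and> card B = t) \<or> (card A = t \<and> card B = s)" "A \<times> B \<subseteq> insert (u, v) E"
    unfolding contains_K_def by blast
  have "(u, v) \<in> A \<times> B"
  proof (rule ccontr)
    assume "(u, v) \<notin> A \<times> B"
    then have "contains_K s t n E"
      using AB unfolding contains_K_def by blast
    then show False
      using K_saturated_K_free[OF sat] by contradiction
  qed
  then show thesis
    using that AB by blast
qed

text \<open>The copy of \<open>K_{s,t}\<close> created by adding \<open>(u, x)\<close> has its side through \<open>x\<close> inside the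
  column of \<open>x\<close> plus \<open>u\<close>, which is too small for the \<open>t\<close>-side.\<close>

lemma K_saturated_low_column:
  assumes sat: "K_saturated s t n E" and "s < t"
    and x: "x < n" and u: "u < n" "(u, x) \<notin> E" and low: "degR E x < s"
  shows "degR E x = s - 1"
    and "\<exists>Q\<subseteq>{..<n}. card Q = t - 1 \<and> insert u {a. (a, x) \<in> E} \<times> Q \<subseteq> E"
proof -
  let ?N = "{a. (a, x) \<in> E}"
  obtain A B where AB: "A \<subseteq> {..<n}" "B \<subseteq> {..<n}"
      "(card A = s \<and> card B = t) \<or> (card A = t \<and> card B = s)"
      "A \<times> B \<subseteq> insert (u, x) E" "u \<in> A" "x \<in> B"
    using K_saturated_new_copy[OF sat u(1) x u(2)] .
  have fin: "finite ?N"
    using finite_column[OF K_saturated_bigraph[OF sat]] .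
  have card_N: "card (insert u ?N) = degR E x + 1"
    using fin u(2) by (simp add: degR_def)
  have A_sub: "A \<subseteq> insert u ?N"
    using AB(4,6) by blast
  then have "card A \<le> degR E x + 1"
    using card_mono[OF _ A_sub] fin card_N by simp
  then have cards: "card A = s" "card B = t" and deg: "degR E x = s - 1"
    using AB(3) low \<open>s < t\<close> by auto
  show "degR E x = s - 1" by (fact deg)
  have "A = insert u ?N"
    using A_sub fin card_N cards(1) deg low by (intro card_subset_eq) auto
  moreover have "card (B - {x}) = t - 1"
    using AB(2,6) cards(2) by (simp add: finite_subset)
  ultimately show "\<exists>Q\<subseteq>{..<n}. card Q = t - 1 \<and> insert u ?N \<times> Q \<subseteq> E"
    using AB(2,4) by (intro exI[of _ "B - {x}"]) auto
qed

lemma K_saturated_degR_ge: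
  assumes sat: "K_saturated s t n E" and "s < t" "s \<le> n" and v: "v < n"
  shows "s - 1 \<le> degR E v"
proof (rule ccontr)
  assume less: "\<not> s - 1 \<le> degR E v"
  have "degR E v \<noteq> n"
    using less \<open>s \<le> n\<close> by linarith
  then have "{u. (u, v) \<in> E} \<noteq> {..<n}"
    by (metis card_lessThan degR_def)
  moreover have "{u. (u, v) \<in> E} \<subseteq> {..<n}"
    using column_subset[OF K_saturated_bigraph[OF sat]] .
  ultimately obtain u where "u < n" "(u, v) \<notin> E"
    by auto
  then show False
    using K_saturated_low_column(1)[OF sat \<open>s < t\<close> v] less by fastforce
qed

lemma min_degree_attained:
  assumes "0 < n"
  obtains v where "v < n" "min_degree n E = degL E v \<or> min_degree n E = degR E v"
proof -
  have "min_degree n E \<in> degL E ` {..<n} \<union> degR E ` {..<n}"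
    unfolding min_degree_def using assms by (intro Min_in) auto
  then show thesis
    using that by blast
qed

lemma K_saturated_min_degree_ge:
  assumes sat: "K_saturated s t n E" and "s < t" "s \<le> n" "0 < n"
  shows "s - 1 \<le> min_degree n E"
proof -
  obtain v where "v < n" "min_degree n E = degL E v \<or> min_degree n E = degR E v"
    using min_degree_attained[OF \<open>0 < n\<close>] .
  then show ?thesis
    using K_saturated_degR_ge[OF sat] K_saturated_degR_ge[of s t n "E\<inverse>"] assms by auto
qed

lemma K_1t_free_degR_less:
  assumes "bigraph n E" "\<not> contains_K 1 t n E" "v < n"
  shows "degR E v < t"
proof (rule ccontr)
  assume "\<not> degR E v < t"
  then obtain T where T: "T \<subseteq> {u. (u, v) \<in> E}" "card T = t"
    by (metis degR_def not_less obtain_subset_with_card_n)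
  then have "T \<subseteq> {..<n}" "T \<times> {v} \<subseteq> E"
    using column_subset[OF assms(1)] by blast+
  then have "contains_K 1 t n E"
    using T(2) assms(3) unfolding contains_K_def by (intro exI[of _ T] exI[of _ "{v}"]) auto
  then show False
    using assms(2) by contradiction
qed

locale saturated_low_column =
  fixes k n :: nat and E :: "(nat \<times> nat) set" and x :: nat
  assumes saturated: "K_saturated (k + 1) (k + 2) n E"
    and x: "x < n" and low: "degR E x \<le> k" and large: "2 * k + 3 \<le> n"
begin

definition A :: "nat set" where "A = {a. (a, x) \<in> E}"

definition C :: "nat set" where "C = {v. v < n \<and> A \<times> {v} \<subseteq> E}"

definition D :: "nat set" where "D = {..<n} - C"

lemma bigraph: "bigraph n E" and K_free: "\<not> contains_K (k + 1) (k + 2) n E"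
  using K_saturated_bigraph[OF saturated] K_saturated_K_free[OF saturated] .

lemma A_subset: "A \<subseteq> {..<n}" and finite_A: "finite A"
  using column_subset[OF bigraph] finite_column[OF bigraph] by (auto simp: A_def)

lemma exists_common_neighbours_insert_A:
  assumes "u < n" "u \<notin> A"
  shows "\<exists>Q\<subseteq>{..<n}. card Q = k + 1 \<and> insert u A \<times> Q \<subseteq> E"
  using K_saturated_low_column(2)[OF saturated _ x, of u] assms low by (auto simp: A_def)

lemma card_A: "card A = k"
proof -
  have "card A < n"
    using low large by (simp add: A_def degR_def)
  then have "A \<noteq> {..<n}"
    by (metis card_lessThan less_irrefl)
  then obtain u where "u < n" "u \<notin> A"
    using A_subset by auto
  then show ?thesis
    using K_saturated_low_column(1)[OF saturated _ x] low by (simp add: A_def degR_def)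
qed

lemma degR_ge: "y < n \<Longrightarrow> k \<le> degR E y"
  using K_saturated_degR_ge[OF saturated, of y] large by simp

lemma card_row_in_C_ge:
  assumes "u \<in> {..<n} - A"
  shows "k + 1 \<le> card {v \<in> C. (u, v) \<in> E}"
proof -
  obtain Q where Q: "Q \<subseteq> {..<n}" "card Q = k + 1" "insert u A \<times> Q \<subseteq> E"
    using exists_common_neighbours_insert_A[of u] assms by blast
  then have "Q \<subseteq> {v \<in> C. (u, v) \<in> E}"
    by (auto simp: C_def)
  moreover have "finite {v \<in> C. (u, v) \<in> E}"
    unfolding C_def by (rule finite_subset[of _ "{..<n}"]) auto
  ultimately show ?thesis
    using Q(2) by (metis card_mono)
qed

lemma card_E_eq_bound_plus_excess:
  "card E = k * n + (k + 1) * (n - k)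
     + (\<Sum>u\<in>{..<n} - A. card {v \<in> C. (u, v) \<in> E} - (k + 1)) + (\<Sum>y\<in>D. degR E y - k)"
proof -
  let ?U = "{..<n}" and ?row = "\<lambda>u. card {v \<in> C. (u, v) \<in> E}"
  have C_sub: "C \<subseteq> ?U" and fin: "finite C" "finite D"
    by (auto simp: C_def D_def)
  have finE: "finite E"
    using finite_if_bigraph[OF bigraph] .
  let ?P = "A \<times> C" and ?Q = "E \<inter> ((?U - A) \<times> C)" and ?R = "E \<inter> (?U \<times> D)"
  have "E = (?P \<union> ?Q) \<union> ?R"
    using bigraph A_subset by (auto simp: bigraph_def C_def D_def)
  then have "card E = card ((?P \<union> ?Q) \<union> ?R)"
    by (rule arg_cong)
  also have "\<dots> = card ?P + card ?Q + card ?R"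
    using finE finite_A fin by (simp add: card_Un_disjoint D_def Int_Un_distrib2 disjoint_iff)
  finally have split: "card E = card ?P + card ?Q + card ?R" .
  have "card ?Q = (\<Sum>u\<in>?U - A. ?row u)"
    using fin by (simp add: card_Int_Times_eq_sum_rows)
  also have "\<dots> = (\<Sum>u\<in>?U - A. (k + 1) + (?row u - (k + 1)))"
  proof (rule sum.cong)
    fix u assume "u \<in> ?U - A"
    then show "?row u = (k + 1) + (?row u - (k + 1))"
      using card_row_in_C_ge[of u] by linarith
  qed simp
  also have "\<dots> = card (?U - A) * (k + 1) + (\<Sum>u\<in>?U - A. ?row u - (k + 1))"
    by (subst sum.distrib) simp
  finally have rows: "card ?Q = card (?U - A) * (k + 1) + (\<Sum>u\<in>?U - A. ?row u - (k + 1))" .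
  have "{u \<in> ?U. (u, y) \<in> E} = {u. (u, y) \<in> E}" for y
    using column_subset[OF bigraph] by blast
  then have "card ?R = (\<Sum>y\<in>D. degR E y)"
    using fin by (simp add: card_Int_Times_eq_sum_columns degR_def)
  also have "\<dots> = (\<Sum>y\<in>D. k + (degR E y - k))"
  proof (rule sum.cong)
    fix y assume "y \<in> D"
    then show "degR E y = k + (degR E y - k)"
      using degR_ge[of y] by (simp add: D_def)
  qed simp
  also have "\<dots> = card D * k + (\<Sum>y\<in>D. degR E y - k)"
    by (subst sum.distrib) simp
  finally have cols: "card ?R = card D * k + (\<Sum>y\<in>D. degR E y - k)" .
  have "card C \<le> n"
    using card_mono[OF _ C_sub] by simp
  then have "card (?U - A) = n - k" "card C + card D = n"
    using A_subset finite_A card_A C_sub fin by (simp_all add: card_Diff_subset D_def)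
  then show ?thesis
    using split rows cols card_A
    by (simp add: card_cartesian_product algebra_simps flip: add_mult_distrib2)
qed

lemma card_lower_bound: "k * n + (k + 1) * (n - k) \<le> card E"
  using card_E_eq_bound_plus_excess by linarith

lemma k_pos: "0 < k"
proof (rule ccontr)
  assume "\<not> 0 < k"
  then have k0: "k = 0" by simp
  have free: "\<not> contains_K 1 2 n E"
    using K_free k0 by (simp add: numeral_2_eq_2)
  have "card E = degR E x + (\<Sum>v\<in>{..<n} - {x}. degR E v)"
    using card_eq_sum_degR[OF bigraph] x by (simp add: sum.remove)
  also have "\<dots> \<le> 0 + (\<Sum>v\<in>{..<n} - {x}. 1)"
    using K_1t_free_degR_less[OF bigraph free] low k0
    by (intro add_mono sum_mono) (auto simp: less_2_cases_iff le_Suc_eq)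
  also have "\<dots> < n"
    using x by simp
  finally show False
    using card_lower_bound k0 by simp
qed

lemma common_neighbours_in_C_if_columns_tight:
  assumes tight: "\<forall>y\<in>D. degR E y = k"
    and y: "y < n" "degR E y = k" and u: "u < n" "(u, y) \<notin> E"
  shows "\<exists>Q\<subseteq>C. card Q = k + 1 \<and> insert u {b. (b, y) \<in> E} \<times> Q \<subseteq> E"
proof -
  let ?R = "{b. (b, y) \<in> E}"
  obtain Q where Q: "Q \<subseteq> {..<n}" "card Q = k + 1" "insert u ?R \<times> Q \<subseteq> E"
    using K_saturated_low_column(2)[OF saturated _ y(1) u] y(2) by auto
  have "card (insert u ?R) = k + 1"
    using u(2) y(2) finite_column[OF bigraph] by (simp add: degR_def)
  have "Q \<subseteq> C"
  proof
    fix q assume "q \<in> Q"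
    then have "insert u ?R \<subseteq> {b. (b, q) \<in> E}"
      using Q(3) by blast
    then have "k + 1 \<le> degR E q"
      using card_mono[OF finite_column[OF bigraph]] \<open>card (insert u ?R) = k + 1\<close> by (metis degR_def)
    then show "q \<in> C"
      using tight Q(1) \<open>q \<in> Q\<close> by (force simp: D_def)
  qed
  then show ?thesis
    using Q(2,3) by blast
qed

lemma D_empty_if_columns_tight:
  assumes tight: "\<forall>y\<in>D. degR E y = k"
  shows "D = {}"
proof (rule ccontr)
  assume "D \<noteq> {}"
  then obtain y a where y: "y < n" "y \<in> D" and a: "a \<in> A" "(a, y) \<notin> E"
    by (auto simp: D_def C_def)
  let ?R = "{b. (b, y) \<in> E}"
  have R: "card ?R = k" "finite ?R" "?R \<subseteq> {..<n}"
    using tight y finite_column[OF bigraph] column_subset[OF bigraph] by (auto simp: degR_def)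
  obtain w where w: "w \<in> ?R" "w \<notin> A"
  proof -
    have "\<not> ?R \<subseteq> A - {a}"
      using card_mono[of "A - {a}" ?R] finite_A card_A a k_pos R(1) by auto
    then show thesis
      using that a by blast
  qed
  obtain u where u: "u < n" "u \<notin> A" "u \<notin> ?R"
  proof -
    have "card (A \<union> ?R) < n"
      using card_Un_le[of A ?R] card_A R(1) large by linarith
    then have "\<not> {..<n} \<subseteq> A \<union> ?R"
      using card_mono[of "A \<union> ?R" "{..<n}"] finite_A R(2) by auto
    then show thesis
      using that by blast
  qed
  obtain Q where Q: "Q \<subseteq> C" "card Q = k + 1" "insert u ?R \<times> Q \<subseteq> E"
    using common_neighbours_in_C_if_columns_tight[OF tight y(1) _ u(1)] u(3) R(1) by (auto simp: degR_def)
  have "insert u (insert w A) \<times> Q \<subseteq> E"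
    using Q(1,3) w(1) by (auto simp: C_def)
  moreover have "card (insert u (insert w A)) = k + 2"
    using u w finite_A card_A by (cases "u = w") auto
  moreover have "insert u (insert w A) \<subseteq> {..<n}" "Q \<subseteq> {..<n}"
    using u(1) w(1) R(3) A_subset Q(1) by (auto simp: C_def)
  ultimately have "contains_K (k + 1) (k + 2) n E"
    unfolding contains_K_def using Q(2) by blast
  then show False
    using K_free by contradiction
qed

lemma family_F_if_card_eq:
  assumes eq: "card E = k * n + (k + 1) * (n - k)"
  shows "family_F (k + 1) (k + 2) n E"
proof -
  have "(\<Sum>u\<in>{..<n} - A. card {v \<in> C. (u, v) \<in> E} - (k + 1)) = 0"
    and "(\<Sum>y\<in>D. degR E y - k) = 0"
    using card_E_eq_bound_plus_excess eq by linarith+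
  then have "\<forall>u\<in>{..<n} - A. card {v \<in> C. (u, v) \<in> E} - (k + 1) = 0"
    and "\<forall>y\<in>D. degR E y - k = 0"
    by (simp_all add: D_def)
  then have rows: "\<forall>u\<in>{..<n} - A. card {v \<in> C. (u, v) \<in> E} = k + 1"
    and cols: "\<forall>y\<in>D. degR E y = k"
    using card_row_in_C_ge degR_ge by (auto simp: D_def intro!: le_antisym)
  have C: "C = {..<n}"
    using D_empty_if_columns_tight[OF cols] by (auto simp: D_def C_def)
  then have "{v \<in> C. (u, v) \<in> E} = {v. (u, v) \<in> E}" for u
    using bigraph by (auto simp: bigraph_def)
  then have "\<forall>u\<in>{..<n} - A. degL E u = k + 2 - 1"
    using rows by (simp add: degL_def)
  moreover have "\<forall>u\<in>A. \<forall>v<n. (u, v) \<in> E"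
    using C by (auto simp: C_def)
  ultimately show ?thesis
    unfolding family_F_def using bigraph K_free A_subset card_A by auto
qed

end

lemma card_full_rows_regular:
  assumes "bigraph n E" "S \<subseteq> {..<n}" and full: "\<forall>u\<in>S. \<forall>v<n. (u, v) \<in> E"
    and regular: "\<forall>u\<in>{..<n} - S. degL E u = d"
  shows "card E = card S * n + d * (n - card S)"
proof -
  have "degL E u = n" if "u \<in> S" for u
  proof -
    have "{v. (u, v) \<in> E} = {..<n}"
      using full that \<open>bigraph n E\<close> by (auto simp: bigraph_def)
    then show ?thesis
      by (simp add: degL_def)
  qed
  then have "card E = (\<Sum>u\<in>S. n) + (\<Sum>u\<in>{..<n} - S. d)"
    using card_eq_sum_degL[OF \<open>bigraph n E\<close>] regular \<open>S \<subseteq> {..<n}\<close>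
    by (simp add: sum.subset_diff[of S "{..<n}"] add.commute)
  then show ?thesis
    using \<open>S \<subseteq> {..<n}\<close> by (simp add: card_Diff_subset finite_subset)
qed

lemma card_family_F:
  assumes "family_F s t n E"
  shows "card E = (s - 1) * n + (t - 1) * (n - (s - 1))"
proof -
  have "bigraph n E"
    using assms by (simp add: family_F_def)
  from assms consider
      (rows) S where "S \<subseteq> {..<n}" "card S = s - 1" "\<forall>u\<in>S. \<forall>v<n. (u, v) \<in> E"
        "\<forall>u\<in>{..<n} - S. degL E u = t - 1"
    | (columns) S where "S \<subseteq> {..<n}" "card S = s - 1" "\<forall>u\<in>S. \<forall>v<n. (u, v) \<in> E\<inverse>"
        "\<forall>u\<in>{..<n} - S. degL (E\<inverse>) u = t - 1"
    unfolding family_F_def by auto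
  then show ?thesis
  proof cases
    case rows
    then show ?thesis
      using card_full_rows_regular[OF \<open>bigraph n E\<close>] by metis
  next
    case columns
    then show ?thesis
      using card_full_rows_regular[OF _ columns(1,3,4)] columns(2) \<open>bigraph n E\<close> by simp
  qed
qed

lemma min_degree_le_degR: "v < n \<Longrightarrow> min_degree n E \<le> degR E v"
  unfolding min_degree_def by (rule Min_le) auto

definition rows_graph :: "nat \<Rightarrow> nat \<Rightarrow> (nat \<Rightarrow> nat set) \<Rightarrow> (nat \<times> nat) set" where
  "rows_graph k n N = {..<k} \<times> {..<n} \<union> (SIGMA u:{k..<n}. N u)"

lemma mem_rows_graph:
  "(u, v) \<in> rows_graph k n N \<longleftrightarrow> (u < k \<and> v < n) \<or> (k \<le> u \<and> u < n \<and> v \<in> N u)"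
  by (auto simp: rows_graph_def)

context
  fixes k n :: nat and N :: "nat \<Rightarrow> nat set"
  assumes k_less: "k < n"
    and N_subset: "\<And>u. u \<in> {k..<n} \<Longrightarrow> N u \<subseteq> {..<n}"
    and card_N: "\<And>u. u \<in> {k..<n} \<Longrightarrow> card (N u) = k + 1"
    and inj_N: "inj_on N {k..<n}"
begin

lemma finite_N: "u \<in> {k..<n} \<Longrightarrow> finite (N u)"
  using card_N by (metis card.infinite add_is_0 one_neq_zero)

lemma bigraph_rows_graph: "bigraph n (rows_graph k n N)"
  using k_less N_subset by (fastforce simp: bigraph_def mem_rows_graph)

lemma rows_graph_row: "u \<in> {k..<n} \<Longrightarrow> {v. (u, v) \<in> rows_graph k n N} = N u"
  using N_subset by (auto simp: mem_rows_graph)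

lemma rows_graph_K_free: "\<not> contains_K (k + 1) (k + 2) n (rows_graph k n N)"
proof
  assume "contains_K (k + 1) (k + 2) n (rows_graph k n N)"
  then obtain P B where PB: "P \<subseteq> {..<n}" "B \<subseteq> {..<n}"
      "(card P = k + 1 \<and> card B = k + 2) \<or> (card P = k + 2 \<and> card B = k + 1)"
      "P \<times> B \<subseteq> rows_graph k n N"
    unfolding contains_K_def by blast
  have B_sub: "B \<subseteq> N u" if "u \<in> P - {..<k}" for u
    using PB(1,4) that by (auto simp: mem_rows_graph)
  have "card P - k \<le> card (P - {..<k})"
    using diff_card_le_card_Diff[of "{..<k}" P] by simp
  from PB(3) show False
  proof
    assume cards: "card P = k + 1 \<and> card B = k + 2"
    then have "card (P - {..<k}) \<noteq> 0"
      using \<open>card P - k \<le> card (P - {..<k})\<close> by simp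
    then obtain u where u: "u \<in> P - {..<k}"
      by (metis card.empty ex_in_conv)
    then have "u \<in> {k..<n}"
      using PB(1) by auto
    then have "card B \<le> card (N u)"
      using card_mono[OF finite_N B_sub[OF u]] by simp
    then show False
      using cards card_N[OF \<open>u \<in> {k..<n}\<close>] by simp
  next
    assume cards: "card P = k + 2 \<and> card B = k + 1"
    then obtain T where "T \<subseteq> P - {..<k}" "card T = 2"
      using \<open>card P - k \<le> card (P - {..<k})\<close> obtain_subset_with_card_n[of 2 "P - {..<k}"] by auto
    then obtain u1 u2 where u: "u1 \<in> P - {..<k}" "u2 \<in> P - {..<k}" "u1 \<noteq> u2"
      by (auto simp: card_2_iff)
    have "B = N u" if "u \<in> P - {..<k}" for u
    proof -
      have "u \<in> {k..<n}"
        using that PB(1) by auto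
      then show ?thesis
        using B_sub[OF that] card_N cards finite_N by (intro card_subset_eq) auto
    qed
    then have "N u1 = N u2"
      using u by metis
    moreover have "u1 \<in> {k..<n}" "u2 \<in> {k..<n}"
      using u PB(1) by auto
    ultimately show False
      using inj_onD[OF inj_N] u(3) by blast
  qed
qed

lemma rows_graph_K_saturated: "K_saturated (k + 1) (k + 2) n (rows_graph k n N)"
  unfolding K_saturated_def
proof (intro conjI allI impI bigraph_rows_graph rows_graph_K_free)
  fix u v assume "u < n" "v < n" and new: "(u, v) \<notin> rows_graph k n N"
  then have u: "u \<in> {k..<n}" and "v \<notin> N u"
    by (auto simp: mem_rows_graph)
  let ?P = "insert u {..<k}" and ?B = "insert v (N u)"
  have "card ?P = k + 1" "card ?B = k + 2"
    using u \<open>v \<notin> N u\<close> card_N[OF u] finite_N[OF u] by auto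
  moreover have "?P \<subseteq> {..<n}" "?B \<subseteq> {..<n}"
    using u \<open>v < n\<close> N_subset[OF u] k_less by auto
  moreover have "?P \<times> ?B \<subseteq> insert (u, v) (rows_graph k n N)"
    using u \<open>v < n\<close> N_subset[OF u] by (auto simp: mem_rows_graph)
  ultimately show "contains_K (k + 1) (k + 2) n (insert (u, v) (rows_graph k n N))"
    unfolding contains_K_def by blast
qed

lemma rows_graph_family_F: "family_F (k + 1) (k + 2) n (rows_graph k n N)"
  unfolding family_F_def
proof (intro conjI disjI1 exI[of _ "{..<k}"] bigraph_rows_graph rows_graph_K_free ballI allI impI)
  show "{..<k} \<subseteq> {..<n}" "card {..<k} = k + 1 - 1"
    using k_less by auto
  show "(u, v) \<in> rows_graph k n N" if "u \<in> {..<k}" "v < n" for u v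
    using that by (simp add: mem_rows_graph)
  show "degL (rows_graph k n N) u = k + 2 - 1" if "u \<in> {..<n} - {..<k}" for u
    using that rows_graph_row card_N by (simp add: degL_def)
qed

lemma min_degree_rows_graph:
  assumes "v < n" "\<forall>u\<in>{k..<n}. v \<notin> N u"
  shows "min_degree n (rows_graph k n N) = k"
proof (rule antisym)
  have "{u. (u, v) \<in> rows_graph k n N} = {..<k}"
    using assms k_less by (auto simp: mem_rows_graph)
  then show "min_degree n (rows_graph k n N) \<le> k"
    using min_degree_le_degR[OF \<open>v < n\<close>, of "rows_graph k n N"] by (simp add: degR_def)
  show "k \<le> min_degree n (rows_graph k n N)"
    using K_saturated_min_degree_ge[OF rows_graph_K_saturated] k_less by simp
qed

end

definition extremal_rows :: "nat \<Rightarrow> nat \<Rightarrow> nat \<Rightarrow> nat set" where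
  "extremal_rows k n u = (if u = n - 1 then {2..k + 2} else insert (u + 1) {1..k})"

lemma extremal_rows_subset:
  "k + 3 \<le> n \<Longrightarrow> u \<in> {k..<n} \<Longrightarrow> extremal_rows k n u \<subseteq> {1..<n}"
  by (auto simp: extremal_rows_def)

lemma card_extremal_rows: "u \<in> {k..<n} \<Longrightarrow> card (extremal_rows k n u) = k + 1"
  by (auto simp: extremal_rows_def)

lemma inj_on_extremal_rows:
  assumes "1 \<le> k"
  shows "inj_on (extremal_rows k n) {k..<n}"
proof (rule inj_onI)
  fix u1 u2 assume u: "u1 \<in> {k..<n}" "u2 \<in> {k..<n}" and eq: "extremal_rows k n u1 = extremal_rows k n u2"
  have one: "1 \<in> extremal_rows k n u \<longleftrightarrow> u \<noteq> n - 1" for u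
    using assms by (simp add: extremal_rows_def)
  show "u1 = u2"
  proof (cases "u1 = n - 1 \<or> u2 = n - 1")
    case True
    then show ?thesis
      using eq one by metis
  next
    case False
    then have "u1 + 1 \<in> extremal_rows k n u1"
      by (simp add: extremal_rows_def)
    then have "u1 + 1 \<in> extremal_rows k n u2"
      using eq by simp
    then have "u1 = u2 \<or> u1 + 1 \<le> k"
      using False by (simp add: extremal_rows_def)
    then show ?thesis
      using u by auto
  qed
qed

lemma exists_extremal_graph:
  assumes "1 \<le> k" "k + 3 \<le> n"
  shows "\<exists>E. K_saturated (k + 1) (k + 2) n E \<and> min_degree n E = k \<and> family_F (k + 1) (k + 2) n E"
proof -
  have "k < n" "0 < n"
    using assms by auto
  moreover have "extremal_rows k n u \<subseteq> {..<n}" "0 \<notin> extremal_rows k n u" if "u \<in> {k..<n}" for u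
    using extremal_rows_subset[OF assms(2) that] by auto
  ultimately show ?thesis
    using rows_graph_K_saturated min_degree_rows_graph rows_graph_family_F
      card_extremal_rows inj_on_extremal_rows[OF assms(1)] by metis
qed

lemma K_saturated_low_min_degree:
  assumes sat: "K_saturated (k + 1) (k + 2) n E" and min_deg: "min_degree n E \<le> k"
    and n_large: "2 * k + 3 \<le> n"
  shows "0 < k" and "min_degree n E = k" and "k * n + (k + 1) * (n - k) \<le> card E"
    and "card E = k * n + (k + 1) * (n - k) \<Longrightarrow> family_F (k + 1) (k + 2) n E"
proof -
  obtain v where "v < n" "min_degree n E = degL E v \<or> min_degree n E = degR E v"
    using min_degree_attained[of n E] n_large by auto
  then obtain F where F: "F = E \<or> F = E\<inverse>" and "degR F v \<le> k"
    using min_deg by (metis degR_converse)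
  moreover have "K_saturated (k + 1) (k + 2) n F"
    using F sat by auto
  ultimately interpret saturated_low_column k n F v
    using n_large \<open>v < n\<close> by unfold_locales
  have card_F: "card F = card E"
    using F by auto
  show "0 < k"
    by (fact k_pos)
  show "min_degree n E = k"
    using K_saturated_min_degree_ge[OF sat] min_deg n_large by simp
  show "k * n + (k + 1) * (n - k) \<le> card E"
    using card_lower_bound card_F by simp
  show "family_F (k + 1) (k + 2) n E" if "card E = k * n + (k + 1) * (n - k)"
  proof -
    have "family_F (k + 1) (k + 2) n F"
      using family_F_if_card_eq that card_F by simp
    then show ?thesis
      using F by auto
  qed
qed

lemma K_saturated_low_min_degree_minimal_iff:
  assumes sat: "K_saturated (k + 1) (k + 2) n E" and low: "min_degree n E < k + 1"
    and large: "2 * k + 3 \<le> n"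
  shows "(\<forall>E'. K_saturated (k + 1) (k + 2) n E' \<and> min_degree n E' < k + 1 \<longrightarrow> card E \<le> card E')
    \<longleftrightarrow> family_F (k + 1) (k + 2) n E \<and> min_degree n E = k"
    (is "?minimal \<longleftrightarrow> _")
proof -
  have bound: "k * n + (k + 1) * (n - k) \<le> card E'"
    if "K_saturated (k + 1) (k + 2) n E'" "min_degree n E' < k + 1" for E'
    using K_saturated_low_min_degree(3)[OF that(1) _ large] that(2) by simp
  have md: "0 < k" "min_degree n E = k"
    using K_saturated_low_min_degree(1,2)[OF sat _ large] low by simp_all
  show ?thesis
  proof
    assume ?minimal
    obtain E0 where "K_saturated (k + 1) (k + 2) n E0" "min_degree n E0 = k" "family_F (k + 1) (k + 2) n E0"
      using exists_extremal_graph[of k n] md(1) large by auto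
    then have "card E \<le> k * n + (k + 1) * (n - k)"
      using \<open>?minimal\<close> card_family_F[of "k + 1" "k + 2" n E0] by fastforce
    then show "family_F (k + 1) (k + 2) n E \<and> min_degree n E = k"
      using K_saturated_low_min_degree(4)[OF sat _ large] bound[OF sat low] low md by simp
  next
    assume "family_F (k + 1) (k + 2) n E \<and> min_degree n E = k"
    then show ?minimal
      using card_family_F[of "k + 1" "k + 2" n E] bound by simp
  qed
qed

theorem proposition2p2:
  fixes t :: nat
  assumes "t > 1"
  shows "\<exists>N. \<forall>n\<ge>N. \<forall>E. K_saturated (t - 1) t n E \<and> min_degree n E < t - 1 \<longrightarrow>
           ((\<forall>E'. K_saturated (t - 1) t n E' \<and> min_degree n E' < t - 1 \<longrightarrow> card E \<le> card E')
            \<longleftrightarrow> (family_F (t - 1) t n E \<and> min_degree n E = t - 2))"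
proof -
  define k where "k = t - 2"
  then have "t - 1 = k + 1" "t = k + 2" "t - 2 = k"
    using assms by auto
  then show ?thesis
    using K_saturated_low_min_degree_minimal_iff[of k] by (intro exI[of _ "2 * k + 3"]) simp
qed

end
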